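(* Let $q\neq-1$ be real and let $n,m\ge0$ be integers. Then $$\sum_{j=0}^{n}(-1)^jq^{\binom{j}{2}}\begin{bmatrix} n\\ j\end{bmatrix}\prod_{i=n+m+1-j}^{n+m}(1+q^i)\;T_{2n+m-j}(1,s,q)=q^{n^2+mn}s^n\,T_m(1,s,q).$$
   Context: $T_0=1$, $T_1=x$, $T_n(x,s,q)=(1+q^{n-1})x\,T_{n-1}(x,s,q)+q^{n-1}s\,T_{n-2}(x,s,q)$ for $n\ge2$; $T_n(1,s,q)$ is its value at $x=1$. Notation: $[m]=1+q+\cdots+q^{m-1}$, $[m]!=[1]\cdots[m]$, $\begin{bmatrix} m\\ j\end{bmatrix}=\frac{[m]!}{[j]![m-j]!}$; empty products equal $1$. *)

theory Defs
  imports Complex_Main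
begin

fun T :: "nat \<Rightarrow> real \<Rightarrow> real \<Rightarrow> real \<Rightarrow> real" where
  "T 0 x s q = 1"
| "T (Suc 0) x s q = x"
| "T (Suc (Suc n)) x s q =
     (1 + q ^ (Suc n)) * x * T (Suc n) x s q + q ^ (Suc n) * s * T n x s q"

definition qint :: "real \<Rightarrow> nat \<Rightarrow> real" where
  "qint q m = (\<Sum>i<m. q ^ i)"

definition qfact :: "real \<Rightarrow> nat \<Rightarrow> real" where
  "qfact q m = (\<Prod>k=1..m. qint q k)"

definition qbinom :: "real \<Rightarrow> nat \<Rightarrow> nat \<Rightarrow> real" where
  "qbinom q m j = qfact q m / (qfact q j * qfact q (m - j))"

end

theory Submission
  imports Defs
begin

text \<open>The coefficients of the sum satisfy a q-Pascal recurrence which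
  expresses the sum for \<open>n + 1\<close> and \<open>m\<close> as the sum for \<open>n\<close> and \<open>m + 2\<close> minus
  \<open>q\<^sup>n (1 + q\<^sup>m\<^sup>+\<^sup>1)\<close> times the sum for \<open>n\<close> and \<open>m + 1\<close>; by induction these are multiples of
  \<open>T\<^sub>m\<^sub>+\<^sub>2\<close> and \<open>T\<^sub>m\<^sub>+\<^sub>1\<close>, and the three-term recurrence of \<open>T\<close> collapses the difference to a
  multiple of \<open>T\<^sub>m\<close>.\<close>

lemma qint_add: "qint q (a + b) = qint q a + q ^ a * qint q b"
  by (induction b) (simp_all add: qint_def algebra_simps power_add)

lemma qint_nonzero:
  assumes "q \<noteq> -1" "k > 0"
  shows "qint q k \<noteq> 0"
proof
  assume zero: "qint q k = 0"
  show False
  proof (cases "q = 1")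
    case True
    then show ?thesis using zero assms by (simp add: qint_def)
  next
    case False
    then have "(1 - q ^ k) / (1 - q) = 0"
      using zero by (simp add: qint_def sum_gp_strict)
    then have "q ^ k = 1" using False by simp
    then have "\<bar>q\<bar> = 1" using power_eq_1_iff[of q k] assms by auto
    then show ?thesis using False assms by (auto simp: abs_if split: if_splits)
  qed
qed

lemma qfact_Suc: "qfact q (Suc k) = qfact q k * qint q (Suc k)"
  by (simp add: qfact_def)

lemma qfact_nonzero: "q \<noteq> -1 \<Longrightarrow> qfact q k \<noteq> 0"
  by (induction k) (simp_all add: qfact_Suc qint_nonzero qfact_def[of q 0])

lemma qbinom_0: "q \<noteq> -1 \<Longrightarrow> qbinom q n 0 = 1"
  by (simp add: qbinom_def qfact_nonzero qfact_def[of q 0])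

lemma qbinom_self: "q \<noteq> -1 \<Longrightarrow> qbinom q n n = 1"
  by (simp add: qbinom_def qfact_nonzero qfact_def[of q 0])

text \<open>The product \<open>\<Prod>i=N+1-j..N. 1 + q ^ i\<close> of the theorem, indexed from the top so that
  both ends can be peeled off.\<close>

definition top_prod :: "real \<Rightarrow> nat \<Rightarrow> nat \<Rightarrow> real" where
  "top_prod q N j = (\<Prod>k<j. 1 + q ^ (N - k))"

lemma top_prod_Suc: "top_prod q N (Suc j) = top_prod q N j * (1 + q ^ (N - j))"
  by (simp add: top_prod_def)

lemma top_prod_Suc_Suc: "top_prod q (Suc N) (Suc j) = (1 + q ^ Suc N) * top_prod q N j"
  by (simp add: top_prod_def prod.lessThan_Suc_shift del: prod.lessThan_Suc)

lemma prod_atLeastAtMost_eq_top_prod: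
  "j \<le> N + 1 \<Longrightarrow> (\<Prod>i=N+1-j..N. 1 + q ^ i) = top_prod q N j"
proof (induction j)
  case 0
  then show ?case by (simp add: top_prod_def)
next
  case (Suc j)
  have "{N + 1 - Suc j..N} = insert (N - j) {N + 1 - j..N}"
    using Suc.prems Icc_eq_insert_lb_nat[of "N - j" N] by (simp add: Suc_diff_le)
  then show ?case using Suc by (simp add: top_prod_Suc)
qed

definition coeff :: "real \<Rightarrow> nat \<Rightarrow> nat \<Rightarrow> nat \<Rightarrow> real" where
  "coeff q n m j = (-1) ^ j * q ^ (j choose 2) * qbinom q n j * top_prod q (n + m) j"

definition coeff_sum :: "real \<Rightarrow> (nat \<Rightarrow> real) \<Rightarrow> nat \<Rightarrow> nat \<Rightarrow> real" where
  "coeff_sum q t n m = (\<Sum>j=0..n. coeff q n m j * t (2*n + m - j))"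

lemma coeff_0: "q \<noteq> -1 \<Longrightarrow> coeff q n m 0 = 1"
  by (simp add: coeff_def top_prod_def qbinom_0 numeral_2_eq_2)

lemma coeff_Suc_self:
  assumes "q \<noteq> -1"
  shows "coeff q (Suc n) m (Suc n) = - (q ^ n * (1 + q ^ (m + 1)) * coeff q n (m + 1) n)"
proof -
  have "Suc n choose 2 = (n choose 2) + n" by (simp add: numeral_2_eq_2)
  moreover have "top_prod q (Suc n + m) (Suc n) = top_prod q (n + (m + 1)) n * (1 + q ^ (m + 1))"
    by (simp add: top_prod_Suc)
  ultimately show ?thesis
    using qbinom_self[OF assms] by (simp add: coeff_def power_add algebra_simps)
qed

text \<open>Combined with \<open>qint_add\<close>, this is the q-Pascal rule behind \<open>coeff_Suc_Suc\<close>.\<close>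

lemma qint_add_identity:
  "q ^ i * qint q (a + b) * (1 + q ^ (m + a + 1)) =
   q ^ i * qint q a * (1 + q ^ (m + a + b + 1)) + q ^ (a + i) * (1 + q ^ (m + 1)) * qint q b"
proof -
  have "q ^ i * qint q (a + b) * (1 + q ^ (m + a + 1)) -
      (q ^ i * qint q a * (1 + q ^ (m + a + b + 1)) + q ^ (a + i) * (1 + q ^ (m + 1)) * qint q b)
    = q ^ i * q ^ (m + a + 1) * (qint q a + q ^ a * qint q b - (qint q b + q ^ b * qint q a))"
    by (simp add: qint_add power_add algebra_simps)
  also have "\<dots> = 0"
    using qint_add[of q a b] qint_add[of q b a] by (simp add: add.commute)
  finally show ?thesis by simp
qed

lemma coeff_Suc_Suc:
  assumes q: "q \<noteq> -1" and "i < n"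
  shows "coeff q (Suc n) m (Suc i) =
    coeff q n (m + 2) (Suc i) - q ^ n * (1 + q ^ (m + 1)) * coeff q n (m + 1) i"
proof -
  obtain a where n: "n = i + a" and "a > 0"
    using \<open>i < n\<close> by (metis add_diff_inverse_nat less_imp_le_nat not_less zero_less_diff)
  define K where "K = qfact q n / (qfact q (Suc i) * qfact q a)"
  define R where "R = top_prod q (n + m + 1) i"
  have "qfact q a = qfact q (a - 1) * qint q a"
    using \<open>a > 0\<close> qfact_Suc[of q "a - 1"] by simp
  then have binom_a: "qbinom q n (Suc i) = K * qint q a"
    unfolding qbinom_def K_def using n qint_nonzero[OF q \<open>a > 0\<close>] qfact_nonzero[OF q]
    by (simp add: field_simps)
  have binom_Suc: "qbinom q (Suc n) (Suc i) = K * qint q (Suc n)"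
    unfolding qbinom_def K_def using n by (simp add: qfact_Suc)
  have binom_i: "qbinom q n i = K * qint q (Suc i)"
    unfolding qbinom_def K_def using n qint_nonzero[OF q, of "Suc i"] qfact_nonzero[OF q]
    by (simp add: field_simps qfact_Suc)
  have prod_Suc: "top_prod q (Suc n + m) (Suc i) = R * (1 + q ^ (m + a + 1))"
  proof -
    have "Suc n + m - i = m + a + 1" "Suc n + m = n + m + 1" using n by simp_all
    then show ?thesis unfolding R_def by (simp only: top_prod_Suc)
  qed
  have prod_m2: "top_prod q (n + (m + 2)) (Suc i) = (1 + q ^ (m + a + Suc i + 1)) * R"
  proof -
    have "m + a + Suc i + 1 = Suc (n + m + 1)" "n + (m + 2) = Suc (n + m + 1)" using n by simp_all
    then show ?thesis unfolding R_def by (simp only: top_prod_Suc_Suc)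
  qed
  have choose_Suc: "Suc i choose 2 = (i choose 2) + i"
    by (simp add: numeral_2_eq_2)
  have Suc_n: "Suc n = a + Suc i" using n by simp
  have "coeff q (Suc n) m (Suc i) = - ((-1) ^ i * q ^ (i choose 2) * K * R) *
      (q ^ i * qint q (a + Suc i) * (1 + q ^ (m + a + 1)))"
    unfolding coeff_def binom_Suc prod_Suc choose_Suc Suc_n[symmetric]
    by (simp add: power_add algebra_simps)
  also have "\<dots> = - ((-1) ^ i * q ^ (i choose 2) * K * R) *
      (q ^ i * qint q a * (1 + q ^ (m + a + Suc i + 1))
        + q ^ (a + i) * (1 + q ^ (m + 1)) * qint q (Suc i))"
    by (simp only: qint_add_identity)
  also have "\<dots> = coeff q n (m + 2) (Suc i) - q ^ n * (1 + q ^ (m + 1)) * coeff q n (m + 1) i"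
    unfolding coeff_def binom_a binom_i prod_m2 choose_Suc R_def using n
    by (simp add: power_add algebra_simps)
  finally show ?thesis .
qed

lemma coeff_Suc:
  assumes "q \<noteq> -1" and "j \<le> Suc n"
  shows "coeff q (Suc n) m j =
    (if j \<le> n then coeff q n (m + 2) j else 0)
    - (if j = 0 then 0 else q ^ n * (1 + q ^ (m + 1)) * coeff q n (m + 1) (j - 1))"
proof (cases j)
  case 0
  then show ?thesis using coeff_0[OF assms(1)] by simp
next
  case (Suc i)
  then consider "i < n" | "i = n" using assms(2) by linarith
  then show ?thesis
    by cases (use Suc coeff_Suc_Suc[OF assms(1)] coeff_Suc_self[OF assms(1)] in auto)
qed

lemma coeff_sum_Suc:
  assumes "q \<noteq> -1"
  shows "coeff_sum q t (Suc n) m =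
    coeff_sum q t n (m + 2) - q ^ n * (1 + q ^ (m + 1)) * coeff_sum q t n (m + 1)"
proof -
  define c where "c = q ^ n * (1 + q ^ (m + 1))"
  let ?A = "\<lambda>j. if j \<le> n then coeff q n (m + 2) j else 0"
  let ?B = "\<lambda>j. if j = 0 then 0 else c * coeff q n (m + 1) (j - 1)"
  let ?t = "\<lambda>j. t (2 * Suc n + m - j)"
  have "coeff_sum q t (Suc n) m = (\<Sum>j=0..Suc n. (?A j - ?B j) * ?t j)"
    unfolding coeff_sum_def c_def using coeff_Suc[OF assms] by (intro sum.cong) auto
  also have "\<dots> = (\<Sum>j=0..Suc n. ?A j * ?t j) - (\<Sum>j=0..Suc n. ?B j * ?t j)"
    by (simp add: left_diff_distrib sum_subtractf)
  also have "(\<Sum>j=0..Suc n. ?A j * ?t j) = coeff_sum q t n (m + 2)"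
    by (simp add: coeff_sum_def sum.atLeast0_atMost_Suc)
  also have "(\<Sum>j=0..Suc n. ?B j * ?t j) = (\<Sum>i=0..n. ?B (Suc i) * ?t (Suc i))"
    by (subst sum.atLeast0_atMost_Suc_shift) simp
  also have "\<dots> = c * coeff_sum q t n (m + 1)"
    by (simp add: coeff_sum_def sum_distrib_left mult.assoc)
  finally show ?thesis by (simp add: c_def)
qed

lemma coeff_sum_eq:
  assumes "q \<noteq> -1"
    and rec: "\<And>k. t (Suc (Suc k)) = (1 + q ^ Suc k) * t (Suc k) + q ^ Suc k * s * t k"
  shows "coeff_sum q t n m = q ^ (n\<^sup>2 + m * n) * s ^ n * t m"
proof (induction n arbitrary: m)
  case 0
  then show ?case by (simp add: coeff_sum_def coeff_0[OF assms(1)])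
next
  case (Suc n)
  have "coeff_sum q t (Suc n) m = q ^ (n\<^sup>2 + (m + 2) * n) * s ^ n * t (Suc (Suc m))
      - q ^ n * (1 + q ^ (m + 1)) * (q ^ (n\<^sup>2 + (m + 1) * n) * s ^ n * t (Suc m))"
    using coeff_sum_Suc[OF assms(1)] Suc by (simp add: numeral_2_eq_2)
  also have "\<dots> = q ^ (n\<^sup>2 + (m + 2) * n) * s ^ n * (t (Suc (Suc m)) - (1 + q ^ (m + 1)) * t (Suc m))"
    by (simp add: power_add algebra_simps)
  also have "\<dots> = q ^ (n\<^sup>2 + (m + 2) * n) * s ^ n * (q ^ (m + 1) * s * t m)"
    using rec[of m] by simp
  also have "\<dots> = q ^ ((Suc n)\<^sup>2 + m * Suc n) * s ^ Suc n * t m"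
    by (simp add: power2_eq_square power_add algebra_simps)
  finally show ?case .
qed

theorem theorem3p2:
  fixes q s :: real and n m :: nat
  assumes "q \<noteq> -1"
  shows "(\<Sum>j=0..n. (-1) ^ j * q ^ (j choose 2) * qbinom q n j
            * (\<Prod>i=n+m+1-j..n+m. (1 + q ^ i)) * T (2*n+m-j) 1 s q)
         = q ^ (n^2 + m*n) * s ^ n * T m 1 s q"
proof -
  have "(\<Sum>j=0..n. (-1) ^ j * q ^ (j choose 2) * qbinom q n j
            * (\<Prod>i=n+m+1-j..n+m. (1 + q ^ i)) * T (2*n+m-j) 1 s q)
      = coeff_sum q (\<lambda>k. T k 1 s q) n m"
    unfolding coeff_sum_def coeff_def
    using prod_atLeastAtMost_eq_top_prod[of _ "n + m" q] by (intro sum.cong refl) simp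
  also have "\<dots> = q ^ (n^2 + m*n) * s ^ n * T m 1 s q"
    by (rule coeff_sum_eq[OF assms]) simp
  finally show ?thesis .
qed

end
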